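(* Let $1<\alpha<2$, $h>0$, and let $G:\mathbb{R}\to\mathbb{R}$ be continuous. Let $(x_n)_{n\ge0}$ be a real sequence of one of the following three kinds: (a) (Caputo universal fractional map) for constants $b_0,b_1\in\mathbb{R}$, $$x_{n+1}=b_0+b_1h(n+1)-\frac{h^{\alpha}}{\Gamma(\alpha)}\sum_{k=0}^{n}G(x_k)\,(n-k+1)^{\alpha-1},\quad n\ge0;$$ (b) (Caputo $h$-difference universal map) for constants $c_0,c_1\in\mathbb{R}$, $$x_{n+1}=c_0+c_1h(n+1)-\frac{h^{\alpha}}{\Gamma(\alpha)}\sum_{s=0}^{n-1}\frac{\Gamma(n-s-1+\alpha)}{\Gamma(n-s)}\,G(x_{s+1}),\quad n\ge0;$$ (c) (Riemann–Liouville universal fractional map) for a constant $c_1\in\mathbb{R}$, $$x_{n}=\frac{c_1}{\Gamma(\alpha)}(nh)^{\alpha-1}-\frac{h^{\alpha}}{\Gamma(\alpha)}\sum_{k=0}^{n-1}(n-k)^{\alpha-1}G(x_k),\quad n\ge1.$$ Set $U(n)=n^{\alpha-1}$ in cases (a),(c) and $U(n)=\Gamma(n+\alpha-1)/\Gamma(n)$ in case (b), for $n\ge1$, with $U(0)=0$, and define the convergent series $$\tilde W_\alpha=\sum_{n=1}^{\infty}(-1)^{n+1}\bigl[U(n)-U(n-1)\bigr].$$ Suppose the limits $x_o=\lim_{n\to\infty}x_{2n+1}$ and $x_e=\lim_{n\to\infty}x_{2n}$ exist in $\mathbb{R}$ (an asymptotic period-two sink). Then $$G(x_o)+G(x_e)=0,\qquad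 x_o-x_e=\frac{\tilde W_\alpha}{2\Gamma(\alpha)}\,h^{\alpha}\bigl[G(x_o)-G(x_e)\bigr].$$
   Context: Here $G=G_K$ is the nonlinearity of the map and $\Gamma$ is the gamma function. In case (a) the first sum term at $k=n$ equals $G(x_n)$; in case (b) the kernel is the falling factorial $(n-s-2+\alpha)^{(\alpha-1)}=\Gamma(n-s-1+\alpha)/\Gamma(n-s)$. *)

theory Defs
  imports "HOL-Analysis.Analysis"
begin

definition U_pow :: "real \<Rightarrow> nat \<Rightarrow> real" where
  "U_pow \<alpha> n = (if n = 0 then 0 else real n powr (\<alpha> - 1))"

definition U_gamma :: "real \<Rightarrow> nat \<Rightarrow> real" where
  "U_gamma \<alpha> n = (if n = 0 then 0 else Gamma (real n + \<alpha> - 1) / Gamma (real n))"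

definition W_tilde :: "(nat \<Rightarrow> real) \<Rightarrow> real" where
  "W_tilde U = (\<Sum>n. (-1) ^ n * (U (Suc n) - U n))"

end

theory Submission
  imports Defs "HOL-Real_Asymp.Real_Asymp"
begin

(* Differencing any of the three maps gives the convolution equation
     x(n+1) - x(n) = B + K d(n) - C (G(x) * d)(n),    d(j) = U(j+1) - U(j),
   whose kernel d is nonnegative, decreasing and null, with divergent partial sums U(n+1).
   Write G(x_k) = a + (-1)^k b + e_k, where a and b are the half-sum and half-difference of
   the even and odd limits and e_k -> 0.  Then (G(x) * d)(n) = a U(n+1) + (-1)^n b A(n) + (e * d)(n),
   with A(n) the partial sums of the alternating series W~, and by Toeplitz's lemma (e * d)(n)
   is o(U(n+1)) and has increments tending to 0.  Since the left-hand side converges along even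
   and along odd n, a = 0, i.e. G(x_o) + G(x_e) = 0; subtracting the even limit from the odd one
   gives 2 (x_o - x_e) / C = (G(x_o) - G(x_e)) W~. *)

lemma eventually_sequentially_even_odd:
  assumes "eventually (\<lambda>n. P (2 * n)) sequentially"
    and "eventually (\<lambda>n. P (2 * n + 1)) sequentially"
  shows "eventually P sequentially"
proof -
  obtain M N where M: "\<And>n. n \<ge> M \<Longrightarrow> P (2 * n)" and N: "\<And>n. n \<ge> N \<Longrightarrow> P (2 * n + 1)"
    using assms by (auto simp: eventually_sequentially)
  have "P n" if "n \<ge> 2 * max M N" for n
  proof (cases "even n")
    case True
    then show ?thesis using M[of "n div 2"] that by auto
  next
    case False
    then show ?thesis using N[of "n div 2"] that by (auto elim: oddE)
  qed
  then show ?thesis by (auto simp: eventually_sequentially)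
qed

lemma tendsto_even_odd:
  assumes "(\<lambda>n. f (2 * n)) \<longlonglongrightarrow> l" and "(\<lambda>n. f (2 * n + 1)) \<longlonglongrightarrow> l"
  shows "f \<longlonglongrightarrow> l"
  using assms by (auto simp: tendsto_def intro: eventually_sequentially_even_odd)

lemma LIMSEQ_even: "f \<longlonglongrightarrow> l \<Longrightarrow> (\<lambda>n. f (2 * n)) \<longlonglongrightarrow> l"
  by (rule filterlim_compose[of f, OF _ filterlim_subseq]) (auto simp: strict_mono_def)

lemma LIMSEQ_odd: "f \<longlonglongrightarrow> l \<Longrightarrow> (\<lambda>n. f (2 * n + 1)) \<longlonglongrightarrow> l"
  by (rule filterlim_compose[of f, OF _ filterlim_subseq]) (auto simp: strict_mono_def)

lemma Toeplitz_tendsto_zero: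
  fixes e :: "nat \<Rightarrow> real" and w :: "nat \<Rightarrow> nat \<Rightarrow> real"
  assumes e: "e \<longlonglongrightarrow> 0" and w_nonneg: "\<And>n k. 0 \<le> w n k"
    and row_bound: "\<And>n. (\<Sum>k\<le>n. w n k) \<le> B" and column_null: "\<And>k. (\<lambda>n. w n k) \<longlonglongrightarrow> 0"
  shows "(\<lambda>n. \<Sum>k\<le>n. e k * w n k) \<longlonglongrightarrow> 0"
proof (rule LIMSEQ_I)
  fix r :: real assume r: "0 < r"
  have B: "0 \<le> B" using row_bound[of 0] w_nonneg[of 0 0] by simp
  define q where "q = r / (2 * (B + 1))"
  have q: "0 < q" "q * B < r / 2" using r B by (simp_all add: q_def field_simps)
  obtain K where K: "\<And>k. k \<ge> K \<Longrightarrow> \<bar>e k\<bar> < q"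
    using LIMSEQ_D[OF e \<open>0 < q\<close>] by auto
  have "(\<lambda>n. \<Sum>k<K. \<bar>e k\<bar> * w n k) \<longlonglongrightarrow> (\<Sum>k<K. \<bar>e k\<bar> * 0)"
    by (intro tendsto_intros column_null)
  then obtain N where N: "\<And>n. n \<ge> N \<Longrightarrow> (\<Sum>k<K. \<bar>e k\<bar> * w n k) < r / 2"
    using LIMSEQ_D[of _ 0 "r / 2"] r by (force simp: sum_nonneg w_nonneg)
  show "\<exists>no. \<forall>n\<ge>no. norm ((\<Sum>k\<le>n. e k * w n k) - 0) < r"
  proof (intro exI allI impI)
    fix n assume n: "n \<ge> max N K"
    have split: "{..n} = {..<K} \<union> {K..n}" using n by auto
    have "\<bar>\<Sum>k\<le>n. e k * w n k\<bar> \<le> (\<Sum>k\<le>n. \<bar>e k\<bar> * w n k)"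
      by (rule order_trans[OF sum_abs]) (simp add: abs_mult w_nonneg)
    also have "\<dots> = (\<Sum>k<K. \<bar>e k\<bar> * w n k) + (\<Sum>k\<in>{K..n}. \<bar>e k\<bar> * w n k)"
      unfolding split by (rule sum.union_disjoint) auto
    also have "(\<Sum>k\<in>{K..n}. \<bar>e k\<bar> * w n k) \<le> q * (\<Sum>k\<in>{K..n}. w n k)"
      unfolding sum_distrib_left using K w_nonneg by (intro sum_mono mult_right_mono) (auto intro: less_imp_le)
    also have "\<dots> \<le> q * B"
      using row_bound[of n] q(1) sum_mono2[of "{..n}" "{K..n}" "w n"] w_nonneg
      by (intro mult_left_mono) force+
    finally show "norm ((\<Sum>k\<le>n. e k * w n k) - 0) < r"
      using N[of n] n q(2) by auto
  qed
qed

definition conv :: "(nat \<Rightarrow> 'a::semiring_0) \<Rightarrow> (nat \<Rightarrow> 'a) \<Rightarrow> nat \<Rightarrow> 'a" where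
  "conv f g n = (\<Sum>k\<le>n. f k * g (n - k))"

lemma conv_commute: "conv f g n = conv g f n" for f g :: "nat \<Rightarrow> 'a::comm_semiring_0"
  unfolding conv_def atMost_atLeast0
  by (subst sum.atLeastAtMost_rev) (simp add: mult.commute)

lemma conv_add_left: "conv (\<lambda>k. f k + g k) h n = conv f h n + conv g h n"
  by (simp add: conv_def distrib_right sum.distrib)

lemma conv_mult_left: "conv (\<lambda>k. c * f k) h n = c * conv f h n"
  by (simp add: conv_def sum_distrib_left mult.assoc)

lemma conv_diff_right: "conv f (\<lambda>j. g j - h j) n = conv f g n - conv f h n"
  for f g h :: "nat \<Rightarrow> 'a::ring"
  by (simp add: conv_def right_diff_distrib sum_subtractf)

lemma conv_const_left: "conv (\<lambda>_. c) h n = c * (\<Sum>j\<le>n. h j)"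
  for h :: "nat \<Rightarrow> 'a::comm_semiring_0"
  by (simp add: conv_commute[of "\<lambda>_. c"] conv_def sum_distrib_left mult.commute)

lemma conv_neg_one_power_left: "conv (\<lambda>k. (-1) ^ k) h n = (-1) ^ n * (\<Sum>j\<le>n. (-1) ^ j * h j)"
  for h :: "nat \<Rightarrow> 'a::comm_ring_1"
proof -
  have "conv (\<lambda>k. (-1) ^ k) h n = conv h (\<lambda>k. (-1) ^ k) n" by (rule conv_commute)
  also have "\<dots> = (\<Sum>j\<le>n. (-1) ^ n * ((-1) ^ j * h j))"
    unfolding conv_def
    by (intro sum.cong refl) (simp add: power_add mult_ac flip: neg_one_power_add_eq_neg_one_power_diff)
  finally show ?thesis by (simp add: sum_distrib_left)
qed

lemma conv_Suc_right:
  assumes "h 0 = 0"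
  shows "conv f h (Suc n) = conv f (\<lambda>j. h (Suc j)) n"
  using assms by (simp add: conv_def Suc_diff_le)

lemma conv_eq_sum_lessThan:
  assumes "h 0 = 0"
  shows "conv f h n = (\<Sum>k<n. f k * h (n - k))"
  using assms by (cases n) (simp_all add: conv_def lessThan_Suc_atMost[symmetric])

lemma conv_even_odd_decomposition:
  fixes g d :: "nat \<Rightarrow> real" and a b :: real
  defines "e \<equiv> \<lambda>k. g k - (a + (-1) ^ k * b)"
  shows "conv g d n = a * (\<Sum>j\<le>n. d j) + b * ((-1) ^ n * (\<Sum>j\<le>n. (-1) ^ j * d j)) + conv e d n"
proof -
  have "g = (\<lambda>k. a + ((\<lambda>k. b * (-1) ^ k) k + e k))" by (auto simp: e_def)
  then have "conv g d n = conv (\<lambda>_. a) d n + (b * conv (\<lambda>k. (-1) ^ k) d n + conv e d n)"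
    by (simp only: conv_add_left conv_mult_left)
  then show ?thesis by (simp add: conv_const_left conv_neg_one_power_left)
qed

lemma even_odd_limits_null_remainder:
  fixes g :: "nat \<Rightarrow> real"
  assumes "(\<lambda>n. g (2 * n)) \<longlonglongrightarrow> g_e" and "(\<lambda>n. g (2 * n + 1)) \<longlonglongrightarrow> g_o"
  shows "(\<lambda>k. g k - ((g_e + g_o) / 2 + (-1) ^ k * ((g_e - g_o) / 2))) \<longlonglongrightarrow> 0"
proof (rule tendsto_even_odd)
  have "(\<lambda>n. g (2 * n) - ((g_e + g_o) / 2 + (g_e - g_o) / 2)) \<longlonglongrightarrow> g_e - ((g_e + g_o) / 2 + (g_e - g_o) / 2)"
    by (intro tendsto_intros assms)
  then show "(\<lambda>n. g (2 * n) - ((g_e + g_o) / 2 + (-1) ^ (2 * n) * ((g_e - g_o) / 2))) \<longlonglongrightarrow> 0"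
    by (simp add: field_simps)
  have "(\<lambda>n. g (2 * n + 1) - ((g_e + g_o) / 2 - (g_e - g_o) / 2)) \<longlonglongrightarrow> g_o - ((g_e + g_o) / 2 - (g_e - g_o) / 2)"
    by (intro tendsto_intros assms)
  then show "(\<lambda>n. g (2 * n + 1) - ((g_e + g_o) / 2 + (-1) ^ (2 * n + 1) * ((g_e - g_o) / 2))) \<longlonglongrightarrow> 0"
    by (simp add: field_simps)
qed

locale fading_kernel =
  fixes d :: "nat \<Rightarrow> real"
  assumes nonneg: "\<And>n. 0 \<le> d n"
    and decreasing: "\<And>n. d (Suc n) \<le> d n"
    and null: "d \<longlonglongrightarrow> 0"
    and partial_sums_at_top: "filterlim (\<lambda>n. \<Sum>j\<le>n. d j) at_top sequentially"
begin

lemma alternating_partial_sums_LIMSEQ: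
  "(\<lambda>n. \<Sum>j\<le>n. (-1) ^ j * d j) \<longlonglongrightarrow> (\<Sum>n. (-1) ^ n * d n)"
  using summable_LIMSEQ' summable_Leibniz'(1)[OF null nonneg decreasing] by blast

lemma partial_sums_at_infinity: "filterlim (\<lambda>n. \<Sum>j\<le>n. d j) at_infinity sequentially"
  using partial_sums_at_top filterlim_at_top_imp_at_infinity by blast

lemma eventually_partial_sums_pos: "eventually (\<lambda>n. (\<Sum>j\<le>n. d j) > 0) sequentially"
  using partial_sums_at_top by (simp add: filterlim_at_top_dense)

lemma shifted_null: "(\<lambda>n. d (n - k)) \<longlonglongrightarrow> 0"
  by (rule filterlim_compose[OF null filterlim_minus_const_nat_at_top])

lemma conv_null_div_partial_sums:
  assumes "e \<longlonglongrightarrow> 0"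
  shows "(\<lambda>n. conv e d n / (\<Sum>j\<le>n. d j)) \<longlonglongrightarrow> 0"
proof -
  have "(\<lambda>n. \<Sum>k\<le>n. e k * (d (n - k) / (\<Sum>j\<le>n. d j))) \<longlonglongrightarrow> 0"
  proof (rule Toeplitz_tendsto_zero[OF assms])
    show "0 \<le> d (n - k) / (\<Sum>j\<le>n. d j)" for n k
      by (simp add: nonneg sum_nonneg)
    have "(\<Sum>k\<le>n. d (n - k)) = (\<Sum>j\<le>n. d j)" for n
      using conv_const_left[of 1 d n] by (simp add: conv_def)
    then show "(\<Sum>k\<le>n. d (n - k) / (\<Sum>j\<le>n. d j)) \<le> 1" for n
      by (simp add: divide_self_if flip: sum_divide_distrib)
    show "(\<lambda>n. d (n - k) / (\<Sum>j\<le>n. d j)) \<longlonglongrightarrow> 0" for k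
      by (rule tendsto_divide_0[OF shifted_null partial_sums_at_infinity])
  qed
  then show ?thesis by (simp add: conv_def sum_divide_distrib)
qed

lemma conv_null_increments:
  assumes e: "e \<longlonglongrightarrow> 0"
  shows "(\<lambda>n. conv e d (Suc n) - conv e d n) \<longlonglongrightarrow> 0"
proof -
  have increment: "conv e d (Suc n) - conv e d n
      = e (Suc n) * d 0 - (\<Sum>k\<le>n. e k * (d (n - k) - d (Suc (n - k))))" for n
    by (simp add: conv_def Suc_diff_le algebra_simps sum_subtractf)
  have "(\<lambda>n. \<Sum>k\<le>n. e k * (d (n - k) - d (Suc (n - k)))) \<longlonglongrightarrow> 0"
  proof (rule Toeplitz_tendsto_zero[OF e])
    show "0 \<le> d (n - k) - d (Suc (n - k))" for n k
      using decreasing by simp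
    have "(\<Sum>k\<le>n. d (n - k) - d (Suc (n - k))) = d 0 - d (Suc n)" for n
      using conv_const_left[of 1 "\<lambda>j. d j - d (Suc j)" n] by (simp add: conv_def sum_telescope)
    then show "(\<Sum>k\<le>n. d (n - k) - d (Suc (n - k))) \<le> d 0" for n
      using nonneg by simp
    show "(\<lambda>n. d (n - k) - d (Suc (n - k))) \<longlonglongrightarrow> 0" for k
      using tendsto_diff[OF shifted_null[of k]
          filterlim_compose[OF LIMSEQ_Suc[OF null] filterlim_minus_const_nat_at_top]]
      by simp
  qed
  then have "(\<lambda>n. e (Suc n) * d 0 - (\<Sum>k\<le>n. e k * (d (n - k) - d (Suc (n - k))))) \<longlonglongrightarrow> 0 * d 0 - 0"
    by (intro tendsto_intros LIMSEQ_Suc[OF e])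
  then show ?thesis by (simp add: increment)
qed

lemma conv_div_partial_sums:
  assumes "(\<lambda>n. g (2 * n)) \<longlonglongrightarrow> g_e" and "(\<lambda>n. g (2 * n + 1)) \<longlonglongrightarrow> g_o"
  shows "(\<lambda>n. conv g d n / (\<Sum>j\<le>n. d j)) \<longlonglongrightarrow> (g_e + g_o) / 2"
proof -
  define D where "D n = (\<Sum>j\<le>n. d j)" for n
  define A where "A n = (\<Sum>j\<le>n. (-1) ^ j * d j)" for n
  define e where "e k = g k - ((g_e + g_o) / 2 + (-1) ^ k * ((g_e - g_o) / 2))" for k
  have decomposition: "conv g d n = (g_e + g_o) / 2 * D n + (g_e - g_o) / 2 * ((-1) ^ n * A n) + conv e d n" for n
    using conv_even_odd_decomposition[where a="(g_e + g_o) / 2" and b="(g_e - g_o) / 2"]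
    unfolding A_def D_def e_def .
  have "(\<lambda>n. A n / D n) \<longlonglongrightarrow> 0"
    unfolding A_def D_def
    by (rule tendsto_divide_0[OF alternating_partial_sums_LIMSEQ partial_sums_at_infinity])
  then have alternating: "(\<lambda>n. (-1) ^ n * A n / D n) \<longlonglongrightarrow> 0"
    using tendsto_rabs_zero_iff[of "\<lambda>n. (-1) ^ n * A n / D n"] tendsto_rabs_zero_iff[of "\<lambda>n. A n / D n"]
    by (simp add: abs_mult)
  have "(\<lambda>n. (g_e + g_o) / 2 + (g_e - g_o) / 2 * ((-1) ^ n * A n / D n) + conv e d n / D n)
      \<longlonglongrightarrow> (g_e + g_o) / 2 + (g_e - g_o) / 2 * 0 + 0"
    unfolding D_def e_def
    by (intro tendsto_intros alternating[unfolded D_def] conv_null_div_partial_sums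
        even_odd_limits_null_remainder assms)
  moreover have "eventually (\<lambda>n. (g_e + g_o) / 2 + (g_e - g_o) / 2 * ((-1) ^ n * A n / D n)
      + conv e d n / D n = conv g d n / D n) sequentially"
    using eventually_partial_sums_pos unfolding D_def[symmetric]
    by eventually_elim (simp add: decomposition field_simps)
  ultimately show ?thesis by (simp add: D_def Lim_transform_eventually)
qed

lemma conv_odd_even_increment:
  assumes "(\<lambda>n. g (2 * n)) \<longlonglongrightarrow> g_e" and "(\<lambda>n. g (2 * n + 1)) \<longlonglongrightarrow> g_o"
  shows "(\<lambda>n. conv g d (2 * n + 1) - conv g d (2 * n)) \<longlonglongrightarrow> (g_o - g_e) * (\<Sum>n. (-1) ^ n * d n)"
proof -
  define W where "W = (\<Sum>n. (-1) ^ n * d n)"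
  define A where "A n = (\<Sum>j\<le>n. (-1) ^ j * d j)" for n
  define e where "e k = g k - ((g_e + g_o) / 2 + (-1) ^ k * ((g_e - g_o) / 2))" for k
  have decomposition: "conv g d n = (g_e + g_o) / 2 * (\<Sum>j\<le>n. d j) + (g_e - g_o) / 2 * ((-1) ^ n * A n)
      + conv e d n" for n
    using conv_even_odd_decomposition[where a="(g_e + g_o) / 2" and b="(g_e - g_o) / 2"]
    unfolding A_def e_def .
  have increment: "conv g d (2 * n + 1) - conv g d (2 * n) = (g_e + g_o) / 2 * d (Suc (2 * n))
      - (g_e - g_o) / 2 * (A (Suc (2 * n)) + A (2 * n)) + (conv e d (Suc (2 * n)) - conv e d (2 * n))" for n
    unfolding decomposition by (simp add: algebra_simps)
  have A: "A \<longlonglongrightarrow> W"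
    unfolding A_def W_def by (rule alternating_partial_sums_LIMSEQ)
  have "(\<lambda>n. (g_e + g_o) / 2 * d (Suc (2 * n)) - (g_e - g_o) / 2 * (A (Suc (2 * n)) + A (2 * n))
        + (conv e d (Suc (2 * n)) - conv e d (2 * n)))
      \<longlonglongrightarrow> (g_e + g_o) / 2 * 0 - (g_e - g_o) / 2 * (W + W) + 0"
  proof (intro tendsto_intros)
    show "(\<lambda>n. d (Suc (2 * n))) \<longlonglongrightarrow> 0" "(\<lambda>n. A (Suc (2 * n))) \<longlonglongrightarrow> W"
      using LIMSEQ_odd[OF null] LIMSEQ_odd[OF A] by simp_all
    show "(\<lambda>n. A (2 * n)) \<longlonglongrightarrow> W" by (rule LIMSEQ_even[OF A])
    have "e \<longlonglongrightarrow> 0" unfolding e_def by (rule even_odd_limits_null_remainder[OF assms])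
    then show "(\<lambda>n. conv e d (Suc (2 * n)) - conv e d (2 * n)) \<longlonglongrightarrow> 0"
      by (rule LIMSEQ_even[OF conv_null_increments])
  qed
  then have "(\<lambda>n. conv g d (2 * n + 1) - conv g d (2 * n))
      \<longlonglongrightarrow> (g_e + g_o) / 2 * 0 - (g_e - g_o) / 2 * (W + W) + 0"
    by (simp only: increment)
  then show ?thesis by (rule tendsto_eq_rhs) (simp add: W_def field_simps)
qed

lemma conv_period_two_limits:
  assumes g_even: "(\<lambda>n. g (2 * n)) \<longlonglongrightarrow> g_e" and g_odd: "(\<lambda>n. g (2 * n + 1)) \<longlonglongrightarrow> g_o"
    and conv_even: "(\<lambda>n. conv g d (2 * n)) \<longlonglongrightarrow> L_e" and conv_odd: "(\<lambda>n. conv g d (2 * n + 1)) \<longlonglongrightarrow> L_o"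
  shows "g_e + g_o = 0" and "L_o - L_e = (g_o - g_e) * (\<Sum>n. (-1) ^ n * d n)"
proof -
  have "(\<lambda>n. conv g d (2 * n) / (\<Sum>j\<le>2 * n. d j)) \<longlonglongrightarrow> 0"
    by (rule tendsto_divide_0[OF conv_even filterlim_compose[OF partial_sums_at_infinity filterlim_subseq]])
      (simp add: strict_mono_def)
  moreover have "(\<lambda>n. conv g d (2 * n) / (\<Sum>j\<le>2 * n. d j)) \<longlonglongrightarrow> (g_e + g_o) / 2"
    by (rule LIMSEQ_even[OF conv_div_partial_sums[OF g_even g_odd]])
  ultimately show "g_e + g_o = 0" using LIMSEQ_unique by fastforce
  show "L_o - L_e = (g_o - g_e) * (\<Sum>n. (-1) ^ n * d n)"
    using tendsto_diff[OF conv_odd conv_even] conv_odd_even_increment[OF g_even g_odd]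
    by (rule LIMSEQ_unique)
qed

end

definition discrete_volterra_eq :: "real \<Rightarrow> (nat \<Rightarrow> real) \<Rightarrow> (nat \<Rightarrow> real) \<Rightarrow> (nat \<Rightarrow> real) \<Rightarrow> bool"
  where "discrete_volterra_eq C U g x \<longleftrightarrow>
    (\<exists>A B K. \<forall>n\<ge>1. x n = A + B * real n + K * U n - C * conv g U n)"

lemma discrete_volterra_period_two_limits:
  fixes U x :: "nat \<Rightarrow> real" and G :: "real \<Rightarrow> real"
  assumes kernel: "fading_kernel (\<lambda>j. U (Suc j) - U j)" and U0: "U 0 = 0" and C: "C \<noteq> 0"
    and G: "isCont G x_o" "isCont G x_e"
    and volterra: "discrete_volterra_eq C U (\<lambda>k. G (x k)) x"
    and odd: "(\<lambda>n. x (2 * n + 1)) \<longlonglongrightarrow> x_o" and even: "(\<lambda>n. x (2 * n)) \<longlonglongrightarrow> x_e"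
  shows "G x_o + G x_e = 0
    \<and> x_o - x_e = C * (\<Sum>n. (-1) ^ n * (U (Suc n) - U n)) * (G x_o - G x_e) / 2"
proof -
  interpret fading_kernel "\<lambda>j. U (Suc j) - U j" by (rule kernel)
  obtain A B K where rec: "\<And>n. n \<ge> 1 \<Longrightarrow> x n = A + B * real n + K * U n - C * conv (\<lambda>k. G (x k)) U n"
    using volterra unfolding discrete_volterra_eq_def by blast
  define T where "T = conv (\<lambda>k. G (x k)) (\<lambda>j. U (Suc j) - U j)"
  have T: "T n = (B + K * (U (Suc n) - U n) - (x (Suc n) - x n)) / C" if "n \<ge> 1" for n
    using rec[OF that] rec[of "Suc n"] C
    by (simp add: T_def conv_diff_right conv_Suc_right[where h=U, OF U0] field_simps)
  have "(\<lambda>n. (B + K * (U (Suc (2 * n)) - U (2 * n)) - (x (2 * n + 1) - x (2 * n))) / C)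
      \<longlonglongrightarrow> (B + K * 0 - (x_o - x_e)) / C"
    by (intro tendsto_intros LIMSEQ_even[OF null] odd even C)
  then have "(\<lambda>n. T (2 * n)) \<longlonglongrightarrow> (B + K * 0 - (x_o - x_e)) / C"
    by (rule Lim_transform_eventually) (auto simp: T eventually_sequentially intro!: exI[of _ 1])
  then have T_even: "(\<lambda>n. T (2 * n)) \<longlonglongrightarrow> (B - (x_o - x_e)) / C" by simp
  have "(\<lambda>n. (B + K * (U (Suc (2 * n + 1)) - U (2 * n + 1)) - (x (Suc (2 * n) + 1) - x (2 * n + 1))) / C)
      \<longlonglongrightarrow> (B + K * 0 - (x_e - x_o)) / C"
    by (intro tendsto_intros LIMSEQ_odd[OF null] odd C) (use LIMSEQ_Suc[OF even] in simp)
  then have "(\<lambda>n. T (2 * n + 1)) \<longlonglongrightarrow> (B + K * 0 - (x_e - x_o)) / C"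
    by (rule Lim_transform_eventually) (auto simp: T)
  then have T_odd: "(\<lambda>n. T (2 * n + 1)) \<longlonglongrightarrow> (B - (x_e - x_o)) / C" by simp
  have G_odd: "(\<lambda>n. G (x (2 * n + 1))) \<longlonglongrightarrow> G x_o" by (rule isCont_tendsto_compose[OF G(1) odd])
  have G_even: "(\<lambda>n. G (x (2 * n))) \<longlonglongrightarrow> G x_e" by (rule isCont_tendsto_compose[OF G(2) even])
  note limits = conv_period_two_limits[OF G_even G_odd T_even[unfolded T_def] T_odd[unfolded T_def]]
  define W where "W = (\<Sum>n. (-1) ^ n * (U (Suc n) - U n))"
  have "(B - (x_e - x_o)) / C - (B - (x_o - x_e)) / C = (G x_o - G x_e) * W"
    using limits(2) by (simp add: W_def)
  then have "x_o - x_e = C * W * (G x_o - G x_e) / 2"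
    using C by (simp add: field_simps) (metis distrib_left mult_left_cancel)
  with limits(1) show ?thesis by (simp add: W_def add.commute)
qed

lemma fading_kernel_increments:
  fixes U :: "nat \<Rightarrow> real"
  assumes "\<And>n. U n \<le> U (Suc n)" and "\<And>n. U (Suc (Suc n)) - U (Suc n) \<le> U (Suc n) - U n"
    and "(\<lambda>n. U (Suc n) - U n) \<longlonglongrightarrow> 0" and "filterlim U at_top sequentially"
  shows "fading_kernel (\<lambda>n. U (Suc n) - U n)"
proof
  have "filterlim (\<lambda>n. - U 0 + U (Suc n)) at_top sequentially"
    using assms(4) by (intro filterlim_tendsto_add_at_top[OF tendsto_const])
      (simp add: filterlim_sequentially_Suc)
  then show "filterlim (\<lambda>n. \<Sum>j\<le>n. U (Suc j) - U j) at_top sequentially"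
    by (simp add: sum_lessThan_telescope flip: lessThan_Suc_atMost)
qed (use assms in auto)

lemma powr_increment_bounds:
  fixes p t :: real
  assumes p: "0 < p" "p < 1" and t: "0 < t"
  shows "p * (t + 1) powr (p - 1) \<le> (t + 1) powr p - t powr p"
    and "(t + 1) powr p - t powr p \<le> p * t powr (p - 1)"
proof -
  have "\<exists>z. t < z \<and> z < t + 1 \<and> (t + 1) powr p - t powr p = (t + 1 - t) * (p * z powr (p - 1))"
    by (rule MVT2) (use t in \<open>auto intro!: has_real_derivative_powr\<close>)
  then obtain z where z: "t < z" "z < t + 1" "(t + 1) powr p - t powr p = p * z powr (p - 1)"
    by auto
  have "(t + 1) powr (p - 1) \<le> z powr (p - 1)" and "z powr (p - 1) \<le> t powr (p - 1)"
    using z t p by (auto intro!: powr_mono2')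
  with z p show "p * (t + 1) powr (p - 1) \<le> (t + 1) powr p - t powr p"
    and "(t + 1) powr p - t powr p \<le> p * t powr (p - 1)" by simp_all
qed

lemma powr_increments_decreasing:
  fixes p :: real
  assumes "0 < p" "p < 1"
  shows "(real n + 2) powr p - (real n + 1) powr p \<le> (real n + 1) powr p - real n powr p"
proof (cases "n = 0")
  case True
  have "2 powr p \<le> 2 powr (1::real)" using assms by (intro powr_mono) auto
  with True assms show ?thesis by simp
next
  case False
  then have "0 < real n" by simp
  then show ?thesis
    using powr_increment_bounds[OF assms, of "real n + 1"] powr_increment_bounds(1)[OF assms, of "real n"]
    by (simp add: add.assoc)
qed

lemma fading_kernel_U_pow:
  assumes "1 < \<alpha>" "\<alpha> < 2"
  shows "fading_kernel (\<lambda>n. U_pow \<alpha> (Suc n) - U_pow \<alpha> n)"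
proof (rule fading_kernel_increments)
  define p where "p = \<alpha> - 1"
  have p: "0 < p" "p < 1" using assms by (simp_all add: p_def)
  have U: "U_pow \<alpha> n = real n powr p" for n by (simp add: U_pow_def p_def)
  show "U_pow \<alpha> n \<le> U_pow \<alpha> (Suc n)" for n using p by (simp add: U powr_mono2)
  show "U_pow \<alpha> (Suc (Suc n)) - U_pow \<alpha> (Suc n) \<le> U_pow \<alpha> (Suc n) - U_pow \<alpha> n" for n
    using powr_increments_decreasing[OF p, of n] by (simp add: U add_ac)
  show "(\<lambda>n. U_pow \<alpha> (Suc n) - U_pow \<alpha> n) \<longlonglongrightarrow> 0"
    unfolding U using p by real_asymp
  show "filterlim (U_pow \<alpha>) at_top sequentially"
    unfolding U using p by real_asymp
qed

lemma Gamma_real_plus1: "0 < z \<Longrightarrow> Gamma (z + 1) = z * Gamma z" for z :: real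
  by (rule Gamma_plus1) (auto dest: nonpos_Ints_nonpos)

lemma Gamma_shift_ratio_LIMSEQ:
  fixes z :: real
  assumes "0 < z"
  shows "(\<lambda>n. Gamma (real n + 1 + z) / (Gamma (real n + 1) * real n powr z)) \<longlonglongrightarrow> 1"
proof -
  have "Gamma z \<noteq> 0" using Gamma_real_pos[OF assms] by linarith
  have ratio: "Gamma z / Gamma_series z n = Gamma (real n + 1 + z) / (Gamma (real n + 1) * real n powr z)"
    if "n \<ge> 1" for n
  proof -
    have "z \<notin> \<int>\<^sub>\<le>\<^sub>0" using assms by (auto dest: nonpos_Ints_nonpos)
    then have "pochhammer z (n + 1) = Gamma (real n + 1 + z) / Gamma z"
      by (simp add: pochhammer_Gamma add_ac)
    moreover have "fact n = Gamma (real n + 1)" using Gamma_fact[of n, where 'a=real] by (simp add: add.commute)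
    ultimately show ?thesis
      using that assms \<open>Gamma z \<noteq> 0\<close> by (simp add: Gamma_series_def powr_def field_simps)
  qed
  have "(\<lambda>n. Gamma z / Gamma_series z n) \<longlonglongrightarrow> Gamma z / Gamma z"
    using \<open>Gamma z \<noteq> 0\<close> by (intro tendsto_intros Gamma_series_LIMSEQ)
  then have "(\<lambda>n. Gamma z / Gamma_series z n) \<longlonglongrightarrow> 1"
    using \<open>Gamma z \<noteq> 0\<close> by simp
  then show ?thesis
    by (rule Lim_transform_eventually) (use ratio in \<open>auto simp: eventually_sequentially\<close>)
qed

lemma U_gamma_increment:
  assumes "1 < \<alpha>"
  shows "U_gamma \<alpha> (Suc n) - U_gamma \<alpha> n = (\<alpha> - 1) * Gamma (real n + \<alpha> - 1) / Gamma (real n + 1)"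
proof (cases "n = 0")
  case True
  then show ?thesis using Gamma_real_plus1[of "\<alpha> - 1"] assms by (simp add: U_gamma_def)
next
  case False
  have "real n > 0" "Gamma (real n) > 0" using False by simp_all
  have "U_gamma \<alpha> (Suc n) - U_gamma \<alpha> n
      = Gamma (real n + \<alpha>) / Gamma (real n + 1) - Gamma (real n + \<alpha> - 1) / Gamma (real n)"
    using False by (simp add: U_gamma_def add_ac)
  also have "Gamma (real n + \<alpha>) = (real n + \<alpha> - 1) * Gamma (real n + \<alpha> - 1)"
    using Gamma_real_plus1[of "real n + \<alpha> - 1"] assms by (simp add: algebra_simps)
  also have "Gamma (real n + 1) = real n * Gamma (real n)"
    using Gamma_real_plus1[of "real n"] False by simp
  also have "(real n + \<alpha> - 1) * Gamma (real n + \<alpha> - 1) / (real n * Gamma (real n))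
      - Gamma (real n + \<alpha> - 1) / Gamma (real n)
      = (\<alpha> - 1) * Gamma (real n + \<alpha> - 1) / (real n * Gamma (real n))"
    using \<open>real n > 0\<close> \<open>Gamma (real n) > 0\<close> by (simp add: divide_simps) (simp add: algebra_simps)
  also have "\<dots> = (\<alpha> - 1) * Gamma (real n + \<alpha> - 1) / Gamma (real n + 1)"
    using Gamma_real_plus1[of "real n"] False by simp
  finally show ?thesis .
qed

lemma fading_kernel_U_gamma:
  assumes "1 < \<alpha>" "\<alpha> < 2"
  shows "fading_kernel (\<lambda>n. U_gamma \<alpha> (Suc n) - U_gamma \<alpha> n)"
proof (rule fading_kernel_increments)
  define z where "z = \<alpha> - 1"
  have z: "0 < z" "z < 1" using assms by (simp_all add: z_def)
  have U_Suc: "U_gamma \<alpha> (Suc n) = Gamma (real n + 1 + z) / Gamma (real n + 1)" for n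
    by (simp add: U_gamma_def z_def add_ac)
  have U_Suc_pos: "0 < U_gamma \<alpha> (Suc n)" for n
    using z by (simp add: U_Suc)
  have d: "U_gamma \<alpha> (Suc n) - U_gamma \<alpha> n = z / (real n + z) * U_gamma \<alpha> (Suc n)" for n
  proof -
    have "real n + z \<noteq> 0" using z by linarith
    have "U_gamma \<alpha> (Suc n) - U_gamma \<alpha> n = z * Gamma (real n + z) / Gamma (real n + 1)"
      using U_gamma_increment[OF assms(1), of n] by (simp add: z_def algebra_simps)
    also have "\<dots> = z / (real n + z) * ((real n + z) * Gamma (real n + z) / Gamma (real n + 1))"
      using \<open>real n + z \<noteq> 0\<close> by simp
    also have "(real n + z) * Gamma (real n + z) = Gamma (real n + 1 + z)"
      using Gamma_real_plus1[of "real n + z"] z by (simp add: add_ac)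
    finally show ?thesis by (simp add: U_Suc)
  qed
  show "U_gamma \<alpha> n \<le> U_gamma \<alpha> (Suc n)" for n
  proof -
    have "0 \<le> z / (real n + z) * U_gamma \<alpha> (Suc n)"
      using U_Suc_pos[of n] z by simp
    then show ?thesis using d[of n] by linarith
  qed
  show "U_gamma \<alpha> (Suc (Suc n)) - U_gamma \<alpha> (Suc n) \<le> U_gamma \<alpha> (Suc n) - U_gamma \<alpha> n" for n
  proof -
    have "Gamma (real n + 1 + 1) = (real n + 1) * Gamma (real n + 1)"
      using Gamma_real_plus1[of "real n + 1"] by simp
    moreover have "Gamma (real n + 1 + 1 + z) = (real n + 1 + z) * Gamma (real n + 1 + z)"
      using Gamma_real_plus1[of "real n + 1 + z"] z by (simp add: add_ac)
    ultimately have "U_gamma \<alpha> (Suc (Suc n)) = (real n + 1 + z) / (real n + 1) * U_gamma \<alpha> (Suc n)"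
      by (simp add: U_Suc[of "Suc n"] U_Suc[of n] add_ac)
    then have "U_gamma \<alpha> (Suc (Suc n)) - U_gamma \<alpha> (Suc n) = z / (real n + 1) * U_gamma \<alpha> (Suc n)"
      by (simp add: field_simps)
    also have "\<dots> \<le> z / (real n + z) * U_gamma \<alpha> (Suc n)"
      using z U_Suc_pos[of n] by (intro mult_right_mono divide_left_mono) auto
    finally show ?thesis by (simp add: d)
  qed
  have R: "(\<lambda>n. U_gamma \<alpha> (Suc n) / real n powr z) \<longlonglongrightarrow> 1"
    using Gamma_shift_ratio_LIMSEQ[OF z(1)] by (simp add: U_Suc field_simps)
  have "filterlim (\<lambda>n. U_gamma \<alpha> (Suc n) / real n powr z * real n powr z) at_top sequentially"
    by (rule filterlim_tendsto_pos_mult_at_top[OF R]) (use z in \<open>simp, real_asymp\<close>)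
  then have "filterlim (\<lambda>n. U_gamma \<alpha> (Suc n)) at_top sequentially"
    by (rule filterlim_cong[OF refl refl, THEN iffD1, rotated])
      (auto simp: eventually_sequentially intro!: exI[of _ 1])
  then show "filterlim (U_gamma \<alpha>) at_top sequentially"
    by (simp only: filterlim_sequentially_Suc)
  have "(\<lambda>n. U_gamma \<alpha> (Suc n) / real n powr z * (z / (real n + z) * real n powr z)) \<longlonglongrightarrow> 1 * 0"
    by (intro tendsto_mult R) (use z in real_asymp)
  then have "(\<lambda>n. U_gamma \<alpha> (Suc n) / real n powr z * (z / (real n + z) * real n powr z)) \<longlonglongrightarrow> 0"
    by simp
  then show "(\<lambda>n. U_gamma \<alpha> (Suc n) - U_gamma \<alpha> n) \<longlonglongrightarrow> 0"
    by (rule Lim_transform_eventually) (auto simp: d eventually_sequentially intro!: exI[of _ 1])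
qed

lemma caputo_map_volterra:
  assumes "\<forall>n. x (n + 1) = b0 + b1 * h * real (n + 1)
      - C * (\<Sum>k=0..n. G (x k) * real (n - k + 1) powr (\<alpha> - 1))"
  shows "discrete_volterra_eq C (U_pow \<alpha>) (\<lambda>k. G (x k)) x"
  unfolding discrete_volterra_eq_def
proof (intro exI allI impI)
  fix n :: nat assume "n \<ge> 1"
  then obtain m where n: "n = Suc m" by (cases n) auto
  have "(\<Sum>k=0..m. G (x k) * real (m - k + 1) powr (\<alpha> - 1))
      = conv (\<lambda>k. G (x k)) (\<lambda>j. U_pow \<alpha> (Suc j)) m"
    by (simp add: conv_def U_pow_def atLeast0AtMost)
  also have "\<dots> = conv (\<lambda>k. G (x k)) (U_pow \<alpha>) n"
    by (simp add: n conv_Suc_right U_pow_def)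
  finally show "x n = b0 + b1 * h * real n + 0 * U_pow \<alpha> n - C * conv (\<lambda>k. G (x k)) (U_pow \<alpha>) n"
    using assms[rule_format, of m] by (simp add: n)
qed

lemma caputo_h_difference_map_volterra:
  assumes "\<forall>n. x (n + 1) = c0 + c1 * h * real (n + 1) - C *
      (\<Sum>s<n. Gamma (real n - real s - 1 + \<alpha>) / Gamma (real n - real s) * G (x (s + 1)))"
  shows "discrete_volterra_eq C (U_gamma \<alpha>) (\<lambda>k. G (x k)) x"
  unfolding discrete_volterra_eq_def
proof (intro exI allI impI)
  fix n :: nat assume "n \<ge> 1"
  then obtain m where n: "n = Suc m" by (cases n) auto
  \<comment> \<open>The sum omits \<open>G (x 0)\<close>, which reappears in the forcing term \<open>C * G (x 0) * U_gamma \<alpha> n\<close>.\<close>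
  have "(\<Sum>s<m. Gamma (real m - real s - 1 + \<alpha>) / Gamma (real m - real s) * G (x (s + 1)))
      = (\<Sum>s<m. G (x (Suc s)) * U_gamma \<alpha> (m - s))"
    by (intro sum.cong refl) (auto simp: U_gamma_def of_nat_diff algebra_simps)
  also have "\<dots> = conv (\<lambda>k. G (x k)) (U_gamma \<alpha>) n - G (x 0) * U_gamma \<alpha> n"
    using conv_eq_sum_lessThan[of "U_gamma \<alpha>" "\<lambda>k. G (x k)"]
    by (simp add: n U_gamma_def[of _ 0] sum.lessThan_Suc_shift del: sum.lessThan_Suc)
  finally have sum_eq: "(\<Sum>s<m. Gamma (real m - real s - 1 + \<alpha>) / Gamma (real m - real s) * G (x (s + 1)))
      = conv (\<lambda>k. G (x k)) (U_gamma \<alpha>) n - G (x 0) * U_gamma \<alpha> n" .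
  show "x n = c0 + c1 * h * real n + C * G (x 0) * U_gamma \<alpha> n
      - C * conv (\<lambda>k. G (x k)) (U_gamma \<alpha>) n"
    using assms[rule_format, of m] unfolding sum_eq by (simp add: n algebra_simps)
qed

lemma riemann_liouville_map_volterra:
  assumes "\<forall>n\<ge>1. x n = c1 / Gamma \<alpha> * (real n * h) powr (\<alpha> - 1)
      - C * (\<Sum>k<n. real (n - k) powr (\<alpha> - 1) * G (x k))"
    and "h > 0"
  shows "discrete_volterra_eq C (U_pow \<alpha>) (\<lambda>k. G (x k)) x"
  unfolding discrete_volterra_eq_def
proof (intro exI allI impI)
  fix n :: nat assume "n \<ge> 1"
  then show "x n = 0 + 0 * real n + c1 / Gamma \<alpha> * h powr (\<alpha> - 1) * U_pow \<alpha> n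
      - C * conv (\<lambda>k. G (x k)) (U_pow \<alpha>) n"
    using assms by (simp add: conv_eq_sum_lessThan U_pow_def powr_mult mult_ac)
qed

theorem mainTheorem2:
  fixes \<alpha> h x_o x_e :: real and G :: "real \<Rightarrow> real" and x :: "nat \<Rightarrow> real"
    and U :: "nat \<Rightarrow> real"
  assumes "1 < \<alpha>" "\<alpha> < 2" "h > 0" "continuous_on UNIV G"
    and cases:
      "(\<exists>b0 b1. (\<forall>n. x (n + 1) = b0 + b1 * h * real (n + 1)
            - h powr \<alpha> / Gamma \<alpha> * (\<Sum>k=0..n. G (x k) * real (n - k + 1) powr (\<alpha> - 1)))
          \<and> U = U_pow \<alpha>)
     \<or> (\<exists>c0 c1. (\<forall>n. x (n + 1) = c0 + c1 * h * real (n + 1)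
            - h powr \<alpha> / Gamma \<alpha> *
              (\<Sum>s<n. Gamma (real n - real s - 1 + \<alpha>) / Gamma (real n - real s) * G (x (s + 1))))
          \<and> U = U_gamma \<alpha>)
     \<or> (\<exists>c1. (\<forall>n\<ge>1. x n = c1 / Gamma \<alpha> * (real n * h) powr (\<alpha> - 1)
            - h powr \<alpha> / Gamma \<alpha> * (\<Sum>k<n. real (n - k) powr (\<alpha> - 1) * G (x k)))
          \<and> U = U_pow \<alpha>)"
    and odd_lim: "(\<lambda>n. x (2 * n + 1)) \<longlonglongrightarrow> x_o"
    and even_lim: "(\<lambda>n. x (2 * n)) \<longlonglongrightarrow> x_e"
  shows "G x_o + G x_e = 0
    \<and> x_o - x_e = W_tilde U / (2 * Gamma \<alpha>) * h powr \<alpha> * (G x_o - G x_e)"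
proof -
  define C where "C = h powr \<alpha> / Gamma \<alpha>"
  have "Gamma \<alpha> > 0" using assms(1) by (intro Gamma_real_pos) simp
  with assms(3) have "C \<noteq> 0" by (simp add: C_def)
  from cases have "U = U_pow \<alpha> \<or> U = U_gamma \<alpha>" by blast
  then have kernel: "fading_kernel (\<lambda>j. U (Suc j) - U j)" and "U 0 = 0"
    using fading_kernel_U_pow[OF assms(1,2)] fading_kernel_U_gamma[OF assms(1,2)]
    by (auto simp: U_pow_def[of _ 0] U_gamma_def[of _ 0])
  from cases have volterra: "discrete_volterra_eq C U (\<lambda>k. G (x k)) x"
    unfolding C_def[symmetric]
    by (elim disjE exE conjE) (blast intro: caputo_map_volterra caputo_h_difference_map_volterra
        riemann_liouville_map_volterra[OF _ \<open>h > 0\<close>])+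
  have continuous: "isCont G y" for y using assms(4) by (simp add: continuous_on_eq_continuous_at)
  have "G x_o + G x_e = 0 \<and> x_o - x_e = C * W_tilde U * (G x_o - G x_e) / 2"
    using discrete_volterra_period_two_limits[OF kernel \<open>U 0 = 0\<close> \<open>C \<noteq> 0\<close> continuous continuous
        volterra odd_lim even_lim]
    unfolding W_tilde_def .
  then show ?thesis by (simp add: C_def mult_ac)
qed

end
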